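(* Let $G$ be a finite simple undirected bipartite graph with $n$ vertices, and let $m$ be a nonnegative integer such that $G$ does not contain more than $m$ pairwise vertex-disjoint $4k$-cycles. Then \[ \operatorname{per}(G)=\begin{cases} (-1)^{n/2}\displaystyle\sum_{z=0}^{m}\frac{4^z}{z!}\sum_{T_z}\det(G\setminus T_z), & \text{if } n \text{ is even},\\[2mm] 0, & \text{if } n \text{ is odd},\end{cases} \] where, for each $z$, the inner sum runs over all ordered tuples $T_z=(R_1,\dots,R_z)$ of $z$ mutually vertex-disjoint $4k$-cycles of $G$.
   Context: For a graph $G$ with vertex set $\{v_1,\dots,v_n\}$, the adjacency matrix $A(G)=(a_{ij})$ is the $n\times n$ matrix with $a_{ij}=1$ if $v_i$ and $v_j$ are adjacent and $a_{ij}=0$ otherwise. $\det(G)$ and $\operatorname{per}(G)$ denote the determinant and permanent of $A(G)$, where $\operatorname{per}(M)=\sum_{\sigma\in S_n}\prod_{i=1}^n a_{i,\sigma(i)}$. A cycle of length $l$ is a sequence of distinct vertices $u_1,\dots,u_l$ with $u_i\sim u_{i+1}$ for $i<l$ and $u_l\sim u_1$ (considered as a subgraph); a $4k$-cycle is a cycle whose length is a positive multiple of $4$. For a tuple $T_z$ of vertex-disjoint cycles, $\det(G\setminus T_z)$ denotes the determinant of the principal submatrix of $A(G)$ obtained by deleting the rows and columns corresponding to all vertices lying on the cycles of $T_z$ (the determinant of the empty matrix being $1$). For $z=0$ the only tuple is the empty tuple $T_0$, so the $z=0$ term is $\det(G)$. *)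

theory Defs
  imports "HOL-Combinatorics.Combinatorics" Complex_Main
begin

definition simple_graph :: "'a set \<Rightarrow> ('a \<Rightarrow> 'a \<Rightarrow> bool) \<Rightarrow> bool" where
  "simple_graph V E \<longleftrightarrow> finite V \<and> (\<forall>x y. E x y \<longrightarrow> E y x)
     \<and> (\<forall>x. \<not> E x x) \<and> (\<forall>x y. E x y \<longrightarrow> x \<in> V \<and> y \<in> V)"

definition bipartite :: "'a set \<Rightarrow> ('a \<Rightarrow> 'a \<Rightarrow> bool) \<Rightarrow> bool" where
  "bipartite V E \<longleftrightarrow> (\<exists>X. X \<subseteq> V \<and> (\<forall>x y. E x y \<longrightarrow> (x \<in> X \<longleftrightarrow> y \<notin> X)))"

definition adj :: "('a \<Rightarrow> 'a \<Rightarrow> bool) \<Rightarrow> 'a \<Rightarrow> 'a \<Rightarrow> int" where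
  "adj E i j = (if E i j then 1 else 0)"

text \<open>Determinant and permanent of the principal submatrix of the adjacency matrix
  indexed by S (Leibniz formulas; empty matrix has determinant/permanent 1).\<close>
definition det_on :: "('a \<Rightarrow> 'a \<Rightarrow> bool) \<Rightarrow> 'a set \<Rightarrow> int" where
  "det_on E S = (\<Sum>p\<in>{p. p permutes S}. sign p * (\<Prod>i\<in>S. adj E i (p i)))"

definition per_on :: "('a \<Rightarrow> 'a \<Rightarrow> bool) \<Rightarrow> 'a set \<Rightarrow> int" where
  "per_on E S = (\<Sum>p\<in>{p. p permutes S}. (\<Prod>i\<in>S. adj E i (p i)))"

text \<open>A cycle of G, considered as a subgraph, represented by its edge set:
  the edges {u_i, u_(i+1)} of a cyclic sequence u_1,...,u_l of distinct vertices,
  consecutive ones adjacent (l \<ge> 3 automatically in a simple graph; stated explicitly).\<close>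
definition cycle_edges :: "'a list \<Rightarrow> 'a set set" where
  "cycle_edges us = {{us ! i, us ! ((i + 1) mod length us)} | i. i < length us}"

definition is_cycle :: "('a \<Rightarrow> 'a \<Rightarrow> bool) \<Rightarrow> 'a set set \<Rightarrow> bool" where
  "is_cycle E C \<longleftrightarrow> (\<exists>us. distinct us \<and> length us \<ge> 3
      \<and> (\<forall>i < length us. E (us ! i) (us ! ((i + 1) mod length us)))
      \<and> C = cycle_edges us)"

definition cycle_verts :: "'a set set \<Rightarrow> 'a set" where
  "cycle_verts C = \<Union>C"

definition is_4k_cycle :: "('a \<Rightarrow> 'a \<Rightarrow> bool) \<Rightarrow> 'a set set \<Rightarrow> bool" where
  "is_4k_cycle E C \<longleftrightarrow> is_cycle E C \<and> 4 dvd card C"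

definition disjoint_4k_tuples :: "('a \<Rightarrow> 'a \<Rightarrow> bool) \<Rightarrow> nat \<Rightarrow> 'a set set list set" where
  "disjoint_4k_tuples E z = {Rs. length Rs = z \<and> (\<forall>R \<in> set Rs. is_4k_cycle E R)
      \<and> (\<forall>i < z. \<forall>j < z. i \<noteq> j \<longrightarrow> cycle_verts (Rs ! i) \<inter> cycle_verts (Rs ! j) = {})}"

definition tuple_verts :: "'a set set list \<Rightarrow> 'a set" where
  "tuple_verts Rs = (\<Union>R \<in> set Rs. cycle_verts R)"

end

theory Submission
  imports Defs
begin

text \<open>Expand both the permanent and the determinant over the edge permutations, i.e. the
  permutations moving every vertex to a neighbour. In a bipartite graph every cycle of such a
  permutation has even length, so its sign is (-1)^(n/2) (-1)^c, where c counts those of its cycles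
  (as cycles of G) whose length is divisible by 4. Hence (-1)^(n/2) det(G \ T) is the sum of (-1)^c
  over the edge permutations of the vertices off T. Gluing one of the two orientations of each cycle
  of T onto such a permutation yields, 2^z to one, exactly the edge permutations of G traversing all
  cycles of T. Exchanging the summations, an edge permutation with c traversed 4k-cycles (pairwise
  disjoint, so c \<le> m) contributes (-1)^c times the sum over z of binomial(c, z) (-2)^z, that is
  (-1)^c (1 - 2)^c = 1; so the right-hand side counts the edge permutations, which is the
  permanent.\<close>

section \<open>Cyclic indexing of lists\<close>

definition cyc_nth :: "'a list \<Rightarrow> nat \<Rightarrow> 'a" where
  "cyc_nth us i = us ! (i mod length us)"

lemma cyc_nth_add_length [simp]: "cyc_nth us (i + length us) = cyc_nth us i"
  by (simp add: cyc_nth_def)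

lemma cyc_nth_in_set: "us \<noteq> [] \<Longrightarrow> cyc_nth us i \<in> set us"
  by (simp add: cyc_nth_def)

lemma set_conv_cyc_nth: "us \<noteq> [] \<Longrightarrow> set us = cyc_nth us ` {..<length us}"
  by (auto simp: cyc_nth_def in_set_conv_nth image_iff)

lemma cyc_nth_eq_iff:
  assumes "distinct us" "us \<noteq> []"
  shows "cyc_nth us i = cyc_nth us j \<longleftrightarrow> i mod length us = j mod length us"
  using assms by (simp add: cyc_nth_def nth_eq_iff_index_eq)

lemma cyc_nth_Suc_eq_iff:
  assumes "distinct us" "us \<noteq> []"
  shows "cyc_nth us (Suc i) = cyc_nth us (Suc j) \<longleftrightarrow> cyc_nth us i = cyc_nth us j"
  unfolding cyc_nth_eq_iff[OF assms] by (metis mod_Suc nat.inject not_less_eq zero_less_Suc)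

lemma cyc_nth_Suc_neq:
  assumes "distinct us" "length us \<ge> 2"
  shows "cyc_nth us (Suc i) \<noteq> cyc_nth us i"
proof -
  have "us \<noteq> []" using assms(2) by auto
  moreover have "Suc i mod length us \<noteq> i mod length us"
    using assms(2) by (simp add: mod_Suc)
  ultimately show ?thesis using cyc_nth_eq_iff[OF assms(1)] by simp
qed

lemma cyc_nth_reachable:
  assumes "us \<noteq> []"
  obtains k where "cyc_nth us (j + k) = cyc_nth us i"
proof
  have "1 * j \<le> length us * j" using assms by (intro mult_le_mono1) (simp add: Suc_le_eq)
  then have "j + (i + length us * j - j) = i + length us * j" by linarith
  then show "cyc_nth us (j + (i + length us * j - j)) = cyc_nth us i"
    by (simp add: cyc_nth_def)
qed

lemma cycle_edges_conv_cyc_nth: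
  "cycle_edges us = (\<lambda>i. {cyc_nth us i, cyc_nth us (Suc i)}) ` {..<length us}"
  unfolding cycle_edges_def cyc_nth_def by (auto simp: image_def)

lemma cyc_nth_edge_in_cycle_edges:
  assumes "us \<noteq> []"
  shows "{cyc_nth us i, cyc_nth us (Suc i)} \<in> cycle_edges us"
proof -
  have "i mod length us \<in> {..<length us}" using assms by simp
  moreover have "{cyc_nth us i, cyc_nth us (Suc i)}
      = {cyc_nth us (i mod length us), cyc_nth us (Suc (i mod length us))}"
    by (simp add: cyc_nth_def mod_Suc_eq)
  ultimately show ?thesis unfolding cycle_edges_conv_cyc_nth by (rule rev_image_eqI)
qed

lemma cycle_verts_cycle_edges:
  assumes "us \<noteq> []"
  shows "cycle_verts (cycle_edges us) = set us"
  using assms set_conv_cyc_nth[OF assms]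
  by (auto simp: cycle_verts_def cycle_edges_conv_cyc_nth intro: cyc_nth_in_set)

lemma cycle_edges_neighbour:
  assumes "distinct us" "us \<noteq> []" "{cyc_nth us (Suc j), x} \<in> cycle_edges us"
  shows "x = cyc_nth us (Suc (Suc j)) \<or> x = cyc_nth us j"
proof -
  obtain i where i: "{cyc_nth us (Suc j), x} = {cyc_nth us i, cyc_nth us (Suc i)}"
    using assms(3) by (auto simp: cycle_edges_conv_cyc_nth)
  show ?thesis
  proof (cases "cyc_nth us (Suc j) = cyc_nth us i")
    case True
    then have "cyc_nth us (Suc i) = cyc_nth us (Suc (Suc j))"
      using cyc_nth_Suc_eq_iff[OF assms(1,2)] by metis
    then show ?thesis using i True by (auto simp: doubleton_eq_iff)
  next
    case False
    then have "cyc_nth us (Suc j) = cyc_nth us (Suc i)" "x = cyc_nth us i"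
      using i by (auto simp: doubleton_eq_iff)
    then show ?thesis using cyc_nth_Suc_eq_iff[OF assms(1,2)] by metis
  qed
qed

lemma card_cycle_edges:
  assumes "distinct us" "length us \<ge> 3"
  shows "card (cycle_edges us) = length us"
proof -
  let ?l = "length us"
  have ne: "us \<noteq> []" using assms(2) by auto
  have "i = j" if ij: "i < ?l" "j < ?l"
    and eq: "{cyc_nth us i, cyc_nth us (Suc i)} = {cyc_nth us j, cyc_nth us (Suc j)}" for i j
  proof (cases "cyc_nth us i = cyc_nth us j")
    case True
    then show ?thesis using cyc_nth_eq_iff[OF assms(1) ne] ij by simp
  next
    case False
    then have "cyc_nth us i = cyc_nth us (Suc j)" "cyc_nth us (Suc i) = cyc_nth us j"
      using eq by (auto simp: doubleton_eq_iff)
    \<comment> \<open>i and j are then neighbours on both sides, which forces the length to divide 2\<close>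
    then have "cyc_nth us (Suc (Suc i)) = cyc_nth us i"
      using cyc_nth_Suc_eq_iff[OF assms(1) ne] by metis
    then have "(i + 2) mod ?l = i mod ?l" using cyc_nth_eq_iff[OF assms(1) ne] by simp
    then have "?l dvd 2" using mod_eq_dvd_iff_nat[of i "i + 2" ?l] by simp
    then show ?thesis using assms(2) by (simp add: nat_dvd_not_less)
  qed
  then have "inj_on (\<lambda>i. {cyc_nth us i, cyc_nth us (Suc i)}) {..<?l}"
    by (auto intro: inj_onI)
  then show ?thesis by (simp add: cycle_edges_conv_cyc_nth card_image)
qed

section \<open>Cycles and the bijections traversing them\<close>

lemma is_cycleE:
  assumes "is_cycle E R"
  obtains us where "distinct us" "length us \<ge> 3" "\<And>i. E (cyc_nth us i) (cyc_nth us (Suc i))"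
    "R = cycle_edges us"
proof -
  obtain us where us: "distinct us" "length us \<ge> 3"
      "\<forall>i < length us. E (us ! i) (us ! ((i + 1) mod length us))" "R = cycle_edges us"
    using assms unfolding is_cycle_def by blast
  have pos: "length us > 0" using us(2) by linarith
  have "E (cyc_nth us i) (cyc_nth us (Suc i))" for i
    using us(3)[rule_format, OF mod_less_divisor[OF pos]] by (simp add: cyc_nth_def mod_Suc_eq)
  then show ?thesis using that us by blast
qed

lemma is_cycle_cycle_edges:
  assumes "distinct us" "length us \<ge> 3" "\<And>i. E (cyc_nth us i) (cyc_nth us (Suc i))"
  shows "is_cycle E (cycle_edges us)"
  using assms unfolding is_cycle_def by (metis Suc_eq_plus1 cyc_nth_def mod_less)

lemma is_cycle_cycle_verts:
  assumes "is_cycle E R"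
  shows "finite (cycle_verts R)" "cycle_verts R \<noteq> {}" "card (cycle_verts R) = card R"
proof -
  obtain us where us: "distinct us" "length us \<ge> 3" "R = cycle_edges us"
    using is_cycleE[OF assms] by metis
  then have "us \<noteq> []" by auto
  then show "finite (cycle_verts R)" "cycle_verts R \<noteq> {}" "card (cycle_verts R) = card R"
    using card_cycle_edges[OF us(1,2)] distinct_card[OF us(1)] us(3)
    by (simp_all add: cycle_verts_cycle_edges)
qed

lemma is_cycle_edge_adjacent:
  assumes "symp E" "is_cycle E R" "{x, y} \<in> R"
  shows "E x y"
proof -
  obtain us where us: "\<And>i. E (cyc_nth us i) (cyc_nth us (Suc i))" "R = cycle_edges us"
    using is_cycleE[OF assms(2)] by metis
  obtain i where "{x, y} = {cyc_nth us i, cyc_nth us (Suc i)}"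
    using assms(3) us(2) by (auto simp: cycle_edges_conv_cyc_nth)
  then show ?thesis using us(1)[of i] assms(1) by (auto simp: doubleton_eq_iff dest: sympD)
qed

lemma simple_graph_cycle_verts_subset:
  assumes "simple_graph V E" "is_cycle E R"
  shows "cycle_verts R \<subseteq> V"
proof
  fix x assume x: "x \<in> cycle_verts R"
  obtain us where us: "length us \<ge> 3" "\<And>i. E (cyc_nth us i) (cyc_nth us (Suc i))"
      "R = cycle_edges us"
    using is_cycleE[OF assms(2)] by metis
  then have ne: "us \<noteq> []" by auto
  then obtain i where "x = cyc_nth us i"
    using x us(3) by (auto simp: cycle_verts_cycle_edges set_conv_cyc_nth)
  then show "x \<in> V" using us(2)[of i] assms(1) unfolding simple_graph_def by metis
qed

lemma is_4k_cycle_cycle_edges_iff: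
  assumes "distinct us" "length us \<ge> 2" "\<And>i. E (cyc_nth us i) (cyc_nth us (Suc i))"
  shows "is_4k_cycle E (cycle_edges us) \<longleftrightarrow> 4 dvd length us"
proof (cases "length us \<ge> 3")
  case True
  then show ?thesis unfolding is_4k_cycle_def
    using is_cycle_cycle_edges[where E = E, OF assms(1) True assms(3)]
      card_cycle_edges[OF assms(1) True] by simp
next
  case False
  \<comment> \<open>for length 2 both edges coincide, so the edge set has a single element\<close>
  then have l2: "length us = 2" using assms(2) by simp
  moreover have "{..<length us} = {0, 1}" using l2 by auto
  ultimately have "cycle_edges us
      = {{cyc_nth us 0, cyc_nth us 1}, {cyc_nth us 1, cyc_nth us (Suc (Suc 0))}}"
    by (simp add: cycle_edges_conv_cyc_nth)
  moreover have "cyc_nth us (Suc (Suc 0)) = cyc_nth us 0"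
    using cyc_nth_add_length[of us 0] l2 by (simp add: numeral_2_eq_2)
  ultimately have "card (cycle_edges us) = 1" by (simp add: insert_commute)
  then show ?thesis unfolding is_4k_cycle_def using l2 by simp
qed

text \<open>For a bijection p, traverses p R says that p restricted to the vertices of the cycle R is
  one of its two rotations.\<close>
definition traverses :: "('a \<Rightarrow> 'a) \<Rightarrow> 'a set set \<Rightarrow> bool" where
  "traverses p R \<longleftrightarrow> R = (\<lambda>y. {y, p y}) ` cycle_verts R"

lemma traverses_cong:
  assumes "\<And>y. y \<in> cycle_verts R \<Longrightarrow> f y = g y"
  shows "traverses f R = traverses g R"
  unfolding traverses_def using assms by (metis (no_types, lifting) image_cong)

lemma traverses_edge:
  assumes "traverses p R" "y \<in> cycle_verts R"
  shows "{y, p y} \<in> R"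
  using assms unfolding traverses_def by (metis imageI)

lemma traverses_closed:
  assumes "traverses p R" "y \<in> cycle_verts R"
  shows "p y \<in> cycle_verts R"
  using traverses_edge[OF assms] unfolding cycle_verts_def by blast

lemma traverses_edgeE:
  assumes "traverses p R" "e \<in> R"
  obtains y where "y \<in> cycle_verts R" "e = {y, p y}"
  using assms unfolding traverses_def by blast

lemma traverses_moves:
  assumes "is_cycle E R" "traverses p R" "y \<in> cycle_verts R"
  shows "p y \<noteq> y"
proof
  assume fixed: "p y = y"
  obtain us where us: "distinct us" "length us \<ge> 3" "R = cycle_edges us"
    using is_cycleE[OF assms(1)] by metis
  obtain i where "{y, p y} = {cyc_nth us i, cyc_nth us (Suc i)}"
    using traverses_edge[OF assms(2,3)] us(3) by (auto simp: cycle_edges_conv_cyc_nth)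
  then show False using fixed cyc_nth_Suc_neq[OF us(1), of i] us(2) by (auto simp: doubleton_eq_iff)
qed

lemma traverses_image:
  assumes "is_cycle E R" "traverses p R" "inj p"
  shows "p ` cycle_verts R = cycle_verts R"
proof -
  have "p ` cycle_verts R \<subseteq> cycle_verts R" using traverses_closed[OF assms(2)] by blast
  moreover have "card (p ` cycle_verts R) = card (cycle_verts R)"
    using card_image assms(3) by (metis inj_on_subset subset_UNIV)
  ultimately show ?thesis using card_subset_eq is_cycle_cycle_verts(1)[OF assms(1)] by metis
qed

lemma traverses_invariant:
  assumes "is_cycle E R" "traverses p R" "inj p"
  shows "p y \<in> cycle_verts R \<longleftrightarrow> y \<in> cycle_verts R"
  using traverses_image[OF assms] assms(3) by (metis image_iff inj_image_mem_iff)

lemma traverses_inv: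
  assumes "is_cycle E R" "traverses p R" "bij p"
  shows "traverses (inv p) R"
proof -
  have "(\<lambda>y. {y, inv p y}) ` cycle_verts R = (\<lambda>y. {y, inv p y}) ` (p ` cycle_verts R)"
    using traverses_image[OF assms(1,2) bij_is_inj[OF assms(3)]] by simp
  also have "\<dots> = (\<lambda>x. {x, p x}) ` cycle_verts R"
    unfolding image_image using assms(3) by (simp add: bij_is_inj insert_commute)
  also have "\<dots> = R" using assms(2) unfolding traverses_def by simp
  finally show ?thesis unfolding traverses_def by simp
qed

lemma traverses_rotation:
  assumes "us \<noteq> []" "\<And>i. f (cyc_nth us i) = cyc_nth us (Suc i)"
  shows "traverses f (cycle_edges us)"
  unfolding traverses_def cycle_verts_cycle_edges[OF assms(1)]
  by (simp add: set_conv_cyc_nth[OF assms(1)] image_image assms(2) cycle_edges_conv_cyc_nth)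

text \<open>A bijection traversing a cycle in the direction of one of its edges rotates the whole
  cycle in that direction: each vertex has only two neighbours on the cycle, and injectivity
  of y \<mapsto> {y, f y} forbids going back.\<close>
lemma traverses_rotation_unique:
  assumes us: "distinct us" "length us \<ge> 3"
    and "inj f" and traverses: "traverses f (cycle_edges us)"
    and start: "f (cyc_nth us j) = cyc_nth us (Suc j)"
  shows "f (cyc_nth us i) = cyc_nth us (Suc i)"
proof -
  let ?R = "cycle_edges us"
  have ne: "us \<noteq> []" using us(2) by auto
  have verts: "cycle_verts ?R = set us" using cycle_verts_cycle_edges[OF ne] .
  have "card ((\<lambda>y. {y, f y}) ` set us) = card (set us)"
    using traverses card_cycle_edges[OF us] distinct_card[OF us(1)] verts
    unfolding traverses_def by simp
  then have inj_edge: "inj_on (\<lambda>y. {y, f y}) (set us)"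
    by (rule eq_card_imp_inj_on[OF finite_set])
  have step: "f (cyc_nth us (Suc n)) = cyc_nth us (Suc (Suc n))"
    if prev: "f (cyc_nth us n) = cyc_nth us (Suc n)" for n
  proof -
    have "{cyc_nth us (Suc n), f (cyc_nth us (Suc n))} \<in> ?R"
      using traverses_edge[OF traverses] verts cyc_nth_in_set[OF ne] by simp
    then have "f (cyc_nth us (Suc n)) = cyc_nth us (Suc (Suc n))
        \<or> f (cyc_nth us (Suc n)) = cyc_nth us n"
      using cycle_edges_neighbour[OF us(1) ne] by blast
    moreover have "f (cyc_nth us (Suc n)) \<noteq> cyc_nth us n"
    proof
      assume "f (cyc_nth us (Suc n)) = cyc_nth us n"
      then have "{cyc_nth us (Suc n), f (cyc_nth us (Suc n))} = {cyc_nth us n, f (cyc_nth us n)}"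
        using prev by auto
      then have "cyc_nth us (Suc n) = cyc_nth us n"
        using inj_edge cyc_nth_in_set[OF ne] unfolding inj_on_def by blast
      then show False using cyc_nth_Suc_neq[OF us(1)] us(2) by simp
    qed
    ultimately show ?thesis by blast
  qed
  have "f (cyc_nth us (j + k)) = cyc_nth us (Suc (j + k))" for k
    by (induction k) (use start step in auto)
  moreover obtain k where "cyc_nth us (j + k) = cyc_nth us i"
    using cyc_nth_reachable[OF ne] .
  ultimately show ?thesis using cyc_nth_Suc_eq_iff[OF us(1) ne] by metis
qed

lemma traverses_subset_or_disjoint:
  assumes "is_cycle E R" "traverses p R" "\<And>y. p y \<in> A \<longleftrightarrow> y \<in> A"
  shows "cycle_verts R \<subseteq> A \<or> cycle_verts R \<inter> A = {}"
proof -
  obtain us where us: "length us \<ge> 3" "R = cycle_edges us"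
    using is_cycleE[OF assms(1)] by metis
  then have ne: "us \<noteq> []" by auto
  have step: "cyc_nth us (Suc i) \<in> A \<longleftrightarrow> cyc_nth us i \<in> A" for i
  proof -
    obtain y where "{cyc_nth us i, cyc_nth us (Suc i)} = {y, p y}"
      using traverses_edgeE[OF assms(2)] cyc_nth_edge_in_cycle_edges[OF ne] us(2) by metis
    then show ?thesis using assms(3)[of y] by (auto simp: doubleton_eq_iff)
  qed
  have "cyc_nth us k \<in> A \<longleftrightarrow> cyc_nth us 0 \<in> A" for k
    by (induction k) (use step in auto)
  then show ?thesis
    using us(2) by (auto simp: cycle_verts_cycle_edges[OF ne] set_conv_cyc_nth[OF ne])
qed

lemma traverses_common_vertex:
  assumes "bij p" "is_cycle E R" "traverses p R" "is_cycle E Q" "traverses p Q"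
    and "cycle_verts R \<inter> cycle_verts Q \<noteq> {}"
  shows "R = Q"
proof -
  have "cycle_verts Q \<subseteq> cycle_verts R" "cycle_verts R \<subseteq> cycle_verts Q"
    using traverses_subset_or_disjoint[OF assms(4,5) traverses_invariant[OF assms(2,3)]]
      traverses_subset_or_disjoint[OF assms(2,3) traverses_invariant[OF assms(4,5)]]
      assms(6) bij_is_inj[OF assms(1)] by blast+
  then show ?thesis using assms(3,5) unfolding traverses_def by (metis subset_antisym)
qed

lemma cycle_of_list_cyc_nth:
  assumes "distinct us" "us \<noteq> []"
  shows "cycle_of_list us (cyc_nth us i) = cyc_nth us (Suc i)"
proof -
  have "map (cycle_of_list us) us = rotate1 us"
    using cyclic_rotation[OF assms(1), of 1] by simp
  moreover have "i mod length us < length us" using assms(2) by simp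
  ultimately show ?thesis
    by (metis cyc_nth_def mod_Suc_eq nth_map nth_rotate1 plus_1_eq_Suc)
qed

lemma rotation_eq_cycle_of_list:
  assumes "distinct us" "us \<noteq> []" "f permutes set us"
    and "\<And>i. f (cyc_nth us i) = cyc_nth us (Suc i)"
  shows "f = cycle_of_list us"
proof
  fix x show "f x = cycle_of_list us x"
  proof (cases "x \<in> set us")
    case True
    then obtain i where "x = cyc_nth us i" using set_conv_cyc_nth[OF assms(2)] by auto
    then show ?thesis using assms(4) cycle_of_list_cyc_nth[OF assms(1,2)] by simp
  next
    case False
    then show ?thesis using assms(3) id_outside_supp by (metis permutes_not_in)
  qed
qed

lemma cycle_of_list_neq_inv:
  assumes "distinct us" "length us \<ge> 3"
  shows "cycle_of_list us \<noteq> inv (cycle_of_list us)"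
proof
  let ?c = "cycle_of_list us"
  have ne: "us \<noteq> []" using assms(2) by auto
  assume "?c = inv ?c"
  then have "?c (?c (cyc_nth us 0)) = cyc_nth us 0"
    using permutes_inverses(1)[OF cycle_permutes] by metis
  then have "cyc_nth us (Suc (Suc 0)) = cyc_nth us 0"
    using cycle_of_list_cyc_nth[OF assms(1) ne] by simp
  then have "Suc (Suc 0) mod length us = 0" using cyc_nth_eq_iff[OF assms(1) ne] by simp
  then show False using assms(2) by simp
qed

definition orientations :: "'a set set \<Rightarrow> ('a \<Rightarrow> 'a) set" where
  "orientations R = {f. f permutes cycle_verts R \<and> traverses f R}"

lemma orientations_cycle_edges:
  assumes us: "distinct us" "length us \<ge> 3"
  shows "orientations (cycle_edges us) = {cycle_of_list us, inv (cycle_of_list us)}"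
proof -
  let ?R = "cycle_edges us" and ?c = "cycle_of_list us"
  have ne: "us \<noteq> []" using us(2) by auto
  have verts: "cycle_verts ?R = set us" using cycle_verts_cycle_edges[OF ne] .
  have cycle: "is_cycle (\<lambda>_ _. True) ?R" by (rule is_cycle_cycle_edges[OF us]) simp
  have c_perm: "?c permutes set us" by (rule cycle_permutes)
  have c_trav: "traverses ?c ?R"
    using traverses_rotation[OF ne cycle_of_list_cyc_nth[OF us(1) ne]] .
  have "f = ?c \<or> f = inv ?c" if "f \<in> orientations ?R" for f
  proof -
    have f_perm: "f permutes set us" and f_trav: "traverses f ?R"
      using that verts unfolding orientations_def by auto
    have "{cyc_nth us (Suc 0), f (cyc_nth us (Suc 0))} \<in> ?R"
      using traverses_edge[OF f_trav] verts cyc_nth_in_set[OF ne] by simp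
    then consider "f (cyc_nth us (Suc 0)) = cyc_nth us (Suc (Suc 0))"
      | "f (cyc_nth us (Suc 0)) = cyc_nth us 0"
      using cycle_edges_neighbour[OF us(1) ne] by blast
    then show ?thesis
    proof cases
      case 1
      then have "f (cyc_nth us i) = cyc_nth us (Suc i)" for i
        using traverses_rotation_unique[OF us permutes_inj[OF f_perm] f_trav] by blast
      then show ?thesis using rotation_eq_cycle_of_list[OF us(1) ne f_perm] by blast
    next
      case 2
      then have "inv f (cyc_nth us 0) = cyc_nth us (Suc 0)"
        using permutes_inverses(2)[OF f_perm] by metis
      then have "inv f (cyc_nth us i) = cyc_nth us (Suc i)" for i
        using traverses_rotation_unique[OF us permutes_inj[OF permutes_inv[OF f_perm]]
            traverses_inv[OF cycle f_trav permutes_bij[OF f_perm]]] by blast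
      then have "inv f = ?c"
        using rotation_eq_cycle_of_list[OF us(1) ne permutes_inv[OF f_perm]] by blast
      then show ?thesis using inv_inv_eq[OF permutes_bij[OF f_perm]] by metis
    qed
  qed
  moreover have "?c \<in> orientations ?R" "inv ?c \<in> orientations ?R"
    using c_perm c_trav permutes_inv[OF c_perm]
      traverses_inv[OF cycle c_trav permutes_bij[OF c_perm]]
    unfolding orientations_def verts by auto
  ultimately show ?thesis by blast
qed

lemma card_orientations:
  assumes "is_cycle E R"
  shows "card (orientations R) = 2"
proof -
  obtain us where us: "distinct us" "length us \<ge> 3" "R = cycle_edges us"
    using is_cycleE[OF assms] by metis
  show ?thesis
    using orientations_cycle_edges[OF us(1,2)] cycle_of_list_neq_inv[OF us(1,2)] us(3) by simp
qed

definition traversed_4k_cycles :: "('a \<Rightarrow> 'a \<Rightarrow> bool) \<Rightarrow> ('a \<Rightarrow> 'a) \<Rightarrow> 'a set set set" where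
  "traversed_4k_cycles E p = {R. is_4k_cycle E R \<and> traverses p R}"

lemma traversed_4k_cyclesD:
  assumes "R \<in> traversed_4k_cycles E p"
  shows "is_4k_cycle E R" "is_cycle E R" "traverses p R"
  using assms unfolding traversed_4k_cycles_def is_4k_cycle_def by auto

lemma traversed_4k_cycles_id: "traversed_4k_cycles E id = {}"
  using traverses_moves is_cycle_cycle_verts(2)
  by (fastforce simp: traversed_4k_cycles_def is_4k_cycle_def)

lemma traversed_4k_cycles_disjoint:
  assumes "bij p" "R \<in> traversed_4k_cycles E p" "Q \<in> traversed_4k_cycles E p" "R \<noteq> Q"
  shows "cycle_verts R \<inter> cycle_verts Q = {}"
  using traverses_common_vertex[OF assms(1)] traversed_4k_cyclesD assms(2-4) by metis

lemma finite_traversed_4k_cycles: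
  assumes "p permutes W" "finite W"
  shows "finite (traversed_4k_cycles E p)"
proof (rule finite_subset)
  show "finite (Pow (Pow W))" using assms(2) by simp
  show "traversed_4k_cycles E p \<subseteq> Pow (Pow W)"
  proof
    fix R assume "R \<in> traversed_4k_cycles E p"
    then have "cycle_verts R \<subseteq> W"
      using traverses_moves traversed_4k_cyclesD assms(1) by (metis permutes_not_in subsetI)
    then show "R \<in> Pow (Pow W)" unfolding cycle_verts_def by blast
  qed
qed

lemma traversed_4k_cycles_cycle_of_list:
  assumes us: "distinct us" "length us \<ge> 2"
  shows "traversed_4k_cycles E (cycle_of_list us)
    = (if is_4k_cycle E (cycle_edges us) then {cycle_edges us} else {})"
proof -
  let ?c = "cycle_of_list us"
  have ne: "us \<noteq> []" using us(2) by auto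
  have rot: "?c (cyc_nth us i) = cyc_nth us (Suc i)" for i
    using cycle_of_list_cyc_nth[OF us(1) ne] .
  have c_trav: "traverses ?c (cycle_edges us)" using traverses_rotation[OF ne rot] .
  have "R = cycle_edges us" if "R \<in> traversed_4k_cycles E ?c" for R
  proof -
    have cycle: "is_cycle E R" and R_trav: "traverses ?c R"
      using traversed_4k_cyclesD(2,3)[OF that] .
    have sub: "cycle_verts R \<subseteq> set us"
    proof
      fix y assume "y \<in> cycle_verts R"
      then have "?c y \<noteq> y" by (rule traverses_moves[OF cycle R_trav])
      then show "y \<in> set us" using id_outside_supp by metis
    qed
    obtain y where "y \<in> cycle_verts R" using is_cycle_cycle_verts(2)[OF cycle] by blast
    then obtain j where j: "cyc_nth us j \<in> cycle_verts R"
      using sub set_conv_cyc_nth[OF ne] by auto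
    have "cyc_nth us (j + k) \<in> cycle_verts R" for k
    proof (induction k)
      case (Suc k)
      then show ?case
        using traverses_closed[OF R_trav, of "cyc_nth us (j + k)"] rot[of "j + k"] by simp
    qed (use j in simp)
    then have "set us \<subseteq> cycle_verts R"
      using cyc_nth_reachable[OF ne] set_conv_cyc_nth[OF ne] by (metis image_subset_iff)
    then have "cycle_verts R = cycle_verts (cycle_edges us)"
      using sub cycle_verts_cycle_edges[OF ne] by auto
    then show ?thesis using R_trav c_trav unfolding traverses_def by metis
  qed
  then have "traversed_4k_cycles E ?c \<subseteq> {cycle_edges us}" by blast
  moreover have "cycle_edges us \<in> traversed_4k_cycles E ?c \<longleftrightarrow> is_4k_cycle E (cycle_edges us)"
    using c_trav unfolding traversed_4k_cycles_def by simp
  ultimately show ?thesis by (cases "is_4k_cycle E (cycle_edges us)") auto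
qed

lemma traversed_4k_cycles_orientation:
  assumes "is_4k_cycle E R" "\<rho> \<in> orientations R"
  shows "traversed_4k_cycles E \<rho> = {R}"
proof -
  have perm: "\<rho> permutes cycle_verts R" and trav: "traverses \<rho> R"
    using assms(2) unfolding orientations_def by auto
  have R_in: "R \<in> traversed_4k_cycles E \<rho>"
    using assms(1) trav unfolding traversed_4k_cycles_def by simp
  have "Q = R" if Q: "Q \<in> traversed_4k_cycles E \<rho>" for Q
  proof -
    obtain y where y: "y \<in> cycle_verts Q"
      using is_cycle_cycle_verts(2) traversed_4k_cyclesD(2)[OF Q] by blast
    then have "\<rho> y \<noteq> y" by (rule traverses_moves[OF traversed_4k_cyclesD(2,3)[OF Q]])
    then have "y \<in> cycle_verts Q \<inter> cycle_verts R" using y permutes_not_in[OF perm] by blast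
    then show ?thesis using traversed_4k_cycles_disjoint[OF permutes_bij[OF perm] Q R_in] by blast
  qed
  then show ?thesis using R_in by blast
qed

lemma traverses_perm_restrict_iff:
  assumes "is_cycle E R"
  shows "traverses (perm_restrict p A) R \<longleftrightarrow> cycle_verts R \<subseteq> A \<and> traverses p R"
proof -
  have "traverses (perm_restrict p A) R \<longleftrightarrow> traverses p R" if "cycle_verts R \<subseteq> A"
    using that by (intro traverses_cong) (auto simp: perm_restrict_simps)
  moreover have "cycle_verts R \<subseteq> A" if "traverses (perm_restrict p A) R"
    using traverses_moves[OF assms that] by (metis perm_restrict_simps(2) subsetI)
  ultimately show ?thesis by blast
qed

lemma traversed_4k_cycles_perm_restrict:
  assumes "\<And>y. p y \<in> A \<longleftrightarrow> y \<in> A"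
  shows "traversed_4k_cycles E p
      = traversed_4k_cycles E (perm_restrict p A) \<union> traversed_4k_cycles E (perm_restrict p (- A))"
    and "traversed_4k_cycles E (perm_restrict p A)
      \<inter> traversed_4k_cycles E (perm_restrict p (- A)) = {}"
proof -
  have "R \<in> traversed_4k_cycles E p \<longleftrightarrow>
      R \<in> traversed_4k_cycles E (perm_restrict p A)
      \<or> R \<in> traversed_4k_cycles E (perm_restrict p (- A))"
    for R
  proof (cases "is_cycle E R")
    case True
    have "traverses p R \<Longrightarrow> cycle_verts R \<subseteq> A \<or> cycle_verts R \<subseteq> - A"
      using traverses_subset_or_disjoint[OF True _ assms] by blast
    then show ?thesis
      using traverses_perm_restrict_iff[OF True] unfolding traversed_4k_cycles_def by blast
  next
    case False
    then show ?thesis unfolding traversed_4k_cycles_def is_4k_cycle_def by simp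
  qed
  then show "traversed_4k_cycles E p
      = traversed_4k_cycles E (perm_restrict p A) \<union> traversed_4k_cycles E (perm_restrict p (- A))"
    by blast
  have "False" if "R \<in> traversed_4k_cycles E (perm_restrict p A)"
    "R \<in> traversed_4k_cycles E (perm_restrict p (- A))" for R
  proof -
    have cycle: "is_cycle E R" using that(1) by (rule traversed_4k_cyclesD)
    have "cycle_verts R \<subseteq> A" "cycle_verts R \<subseteq> - A"
      using traversed_4k_cyclesD(3)[OF that(1)] traversed_4k_cyclesD(3)[OF that(2)]
      unfolding traverses_perm_restrict_iff[OF cycle] by blast+
    then show False using is_cycle_cycle_verts(2)[OF cycle] by blast
  qed
  then show "traversed_4k_cycles E (perm_restrict p A)
      \<inter> traversed_4k_cycles E (perm_restrict p (- A)) = {}"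
    by blast
qed

lemma perm_restrict_compose_compl:
  assumes "\<And>y. p y \<in> A \<longleftrightarrow> y \<in> A"
  shows "p = perm_restrict p A \<circ> perm_restrict p (- A)"
  using assms by (auto simp: perm_restrict_def fun_eq_iff)

definition edge_perms :: "('a \<Rightarrow> 'a \<Rightarrow> bool) \<Rightarrow> 'a set \<Rightarrow> ('a \<Rightarrow> 'a) set" where
  "edge_perms E W = {p. p permutes W \<and> (\<forall>i\<in>W. E i (p i))}"

lemma finite_edge_perms: "finite W \<Longrightarrow> finite (edge_perms E W)"
  unfolding edge_perms_def by (rule finite_subset[OF _ finite_permutations]) auto

lemma perm_restrict_edge_perms:
  assumes "p \<in> edge_perms E W" "\<And>y. p y \<in> A \<longleftrightarrow> y \<in> A"
  shows "perm_restrict p A \<in> edge_perms E (W \<inter> A)"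
proof -
  have perm: "p permutes W" and edges: "\<forall>i\<in>W. E i (p i)"
    using assms(1) unfolding edge_perms_def by auto
  have "bij_betw (perm_restrict p A) (W \<inter> A) (W \<inter> A)"
  proof (rule bij_betw_imageI)
    show "inj_on (perm_restrict p A) (W \<inter> A)"
      using permutes_inj[OF perm] by (auto simp: inj_on_def perm_restrict_simps dest: injD)
    have "x \<in> p ` (W \<inter> A)" if "x \<in> W \<inter> A" for x
    proof (rule image_eqI)
      show "x = p (inv p x)" using permutes_inverses(1)[OF perm] by simp
      then show "inv p x \<in> W \<inter> A"
        using that assms(2)[of "inv p x"] permutes_in_image[OF permutes_inv[OF perm]] by auto
    qed
    then have "p ` (W \<inter> A) = W \<inter> A" using permutes_in_image[OF perm] assms(2) by auto
    moreover have "perm_restrict p A ` (W \<inter> A) = p ` (W \<inter> A)"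
      by (rule image_cong) (simp_all add: perm_restrict_simps)
    ultimately show "perm_restrict p A ` (W \<inter> A) = W \<inter> A" by simp
  qed
  then have "perm_restrict p A permutes (W \<inter> A)"
    by (rule bij_imp_permutes) (use permutes_not_in[OF perm] in \<open>auto simp: perm_restrict_def\<close>)
  then show ?thesis using edges unfolding edge_perms_def by (simp add: perm_restrict_simps)
qed

lemma prod_adj:
  assumes "finite W"
  shows "(\<Prod>i\<in>W. adj E i (p i)) = (if \<forall>i\<in>W. E i (p i) then 1 else 0)"
  using assms by (auto simp: adj_def)

lemma edge_perms_eq_filter: "edge_perms E W = {p \<in> {p. p permutes W}. \<forall>i\<in>W. E i (p i)}"
  by (auto simp: edge_perms_def)

lemma per_on_eq_card_edge_perms:
  assumes "finite W"
  shows "per_on E W = int (card (edge_perms E W))"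
proof -
  have "per_on E W = (\<Sum>p\<in>{p. p permutes W}. if \<forall>i\<in>W. E i (p i) then 1 else 0)"
    unfolding per_on_def using prod_adj[OF assms] by simp
  also have "\<dots> = (\<Sum>p\<in>edge_perms E W. 1)"
    unfolding edge_perms_eq_filter
      by (rule sum.inter_filter[symmetric, OF finite_permutations[OF assms]])
  finally show ?thesis by simp
qed

lemma det_on_eq_sum_edge_perms:
  assumes "finite W"
  shows "det_on E W = (\<Sum>p\<in>edge_perms E W. sign p)"
proof -
  have "det_on E W = (\<Sum>p\<in>{p. p permutes W}. if \<forall>i\<in>W. E i (p i) then sign p else 0)"
    unfolding det_on_def using prod_adj[OF assms] by (intro sum.cong) auto
  also have "\<dots> = (\<Sum>p\<in>edge_perms E W. sign p)"
    unfolding edge_perms_eq_filter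
      by (rule sum.inter_filter[symmetric, OF finite_permutations[OF assms]])
  finally show ?thesis .
qed

section \<open>Signs of edge permutations of bipartite graphs\<close>

lemma support_cyc_nth:
  assumes "permutation p"
  shows "cyc_nth (support p s) i = (p ^^ i) s"
proof -
  have "least_power p s > 0" "(p ^^ least_power p s) s = s"
    using least_power_of_permutation[OF assms] by auto
  then show ?thesis unfolding cyc_nth_def by (simp add: funpow_mod_eq)
qed

lemma sign_cycle_of_list:
  assumes "distinct us" "us \<noteq> []"
  shows "sign (cycle_of_list us) = (-1::int) ^ (length us - 1)"
  using assms
proof (induction us rule: cycle_of_list.induct)
  case (1 i j cs)
  have "sign (cycle_of_list (i # j # cs)) = sign (transpose i j) * sign (cycle_of_list (j # cs))"
    by (simp add: sign_compose permutation_swap_id permutation_of_cycle)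
  also have "\<dots> = (-1) ^ (length (i # j # cs) - 1)"
    using "1.prems" "1.IH" by (simp add: sign_swap_id)
  finally show ?case .
qed simp_all

lemma bipartite_closed_walk_even:
  assumes "\<forall>x y. E x y \<longrightarrow> (x \<in> X \<longleftrightarrow> y \<notin> X)"
    and "\<And>i. E (cyc_nth us i) (cyc_nth us (Suc i))"
  shows "even (length us)"
proof -
  have "cyc_nth us i \<in> X \<longleftrightarrow> (cyc_nth us 0 \<in> X \<longleftrightarrow> even i)" for i
  proof (induction i)
    case (Suc i)
    then show ?case using assms(1) assms(2)[of i] by auto
  qed simp
  from this[of "length us"] show ?thesis using cyc_nth_add_length[of us 0] by auto
qed

lemma edge_perm_support:
  assumes "finite W" "p \<in> edge_perms E W" "s \<in> W"
  defines "us \<equiv> support p s"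
  shows "distinct us" "s \<in> set us" "set us \<subseteq> W"
    and "\<And>i. E (cyc_nth us i) (cyc_nth us (Suc i))"
    and "\<And>y. p y \<in> set us \<longleftrightarrow> y \<in> set us"
    and "perm_restrict p (set us) = cycle_of_list us"
proof -
  have perm: "p permutes W" and edges: "\<forall>i\<in>W. E i (p i)"
    using assms(2) unfolding edge_perms_def by auto
  have permutation: "permutation p" using permutation_permutes assms(1) perm by blast
  have orbit: "set us = orbit p s"
    using support_set[OF permutation] orbit_altdef_permutation[OF permutation]
      unfolding us_def by auto
  show "distinct us" unfolding us_def by (rule cycle_of_permutation[OF permutation])
  show "s \<in> set us" using orbit permutation_self_in_orbit[OF permutation] by simp
  show sub: "set us \<subseteq> W" using orbit permutes_orbit_subset[OF perm assms(3)] by simp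
  show "p y \<in> set us \<longleftrightarrow> y \<in> set us" for y
    using cyclic_on_orbit[OF perm assms(1)] cyclic_on_inI cyclic_on_f_in[OF perm] orbit by metis
  have rot: "p (cyc_nth us i) = cyc_nth us (Suc i)" for i
    unfolding us_def support_cyc_nth[OF permutation] by simp
  moreover have "cyc_nth us i \<in> W" for i
    using sub support_cyc_nth[OF permutation] support_set[OF permutation] unfolding us_def by auto
  ultimately show "E (cyc_nth us i) (cyc_nth us (Suc i))" for i using edges by metis
  show "perm_restrict p (set us) = cycle_of_list us"
  proof
    fix x
    show "perm_restrict p (set us) x = cycle_of_list us x"
      using cycle_restrict[OF permutation, of x s] id_outside_supp[of x us] unfolding us_def
      by (cases "x \<in> set (support p s)") (simp_all add: perm_restrict_simps)
  qed
qed

lemma minus_one_power_half_times_pred: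
  assumes "even l" "l \<ge> 2"
  shows "(-1::int) ^ (l div 2) * (-1) ^ (l - 1) = (if 4 dvd l then -1 else 1)"
proof -
  have "(-1::int) ^ (l div 2) * (-1) ^ (l - 1) = (-1) ^ (l div 2 + (l - 1))"
    by (simp add: power_add)
  moreover have "even (l div 2 + (l - 1)) \<longleftrightarrow> \<not> 4 dvd l"
    using assms by presburger
  ultimately show ?thesis by (simp add: minus_one_power_iff)
qed

lemma edge_perm_remove_support:
  assumes "finite W" "p \<in> edge_perms E W" "s \<in> W"
    and "\<forall>x. \<not> E x x" "\<forall>x y. E x y \<longrightarrow> (x \<in> X \<longleftrightarrow> y \<notin> X)"
  defines "us \<equiv> support p s" and "q \<equiv> perm_restrict p (- set (support p s))"
  shows "s \<in> set us" "q \<in> edge_perms E (W - set us)"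
    and "even (length us)" "length us \<ge> 2"
    and "card W = card (W - set us) + length us"
    and "sign p = (-1) ^ (length us - 1) * sign q"
    and "card (traversed_4k_cycles E p)
      = (if 4 dvd length us then 1 else 0) + card (traversed_4k_cycles E q)"
proof -
  note orbit = edge_perm_support[OF assms(1-3), folded us_def]
  have q_eq: "q = perm_restrict p (- set us)" unfolding q_def us_def ..
  show "s \<in> set us" by (rule orbit(2))
  show "even (length us)" by (rule bipartite_closed_walk_even[OF assms(5) orbit(4)])
  have "length us \<noteq> 1"
  proof
    assume "length us = 1"
    then have "cyc_nth us (Suc 0) = cyc_nth us 0" using cyc_nth_add_length[of us 0] by simp
    then show False using orbit(4)[of 0] assms(4) by metis
  qed
  moreover have ne: "us \<noteq> []" using orbit(2) by auto
  moreover have "length us > 0" using ne by simp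
  ultimately show len: "length us \<ge> 2" by linarith
  show q: "q \<in> edge_perms E (W - set us)"
    using perm_restrict_edge_perms[OF assms(2), of "- set us"] orbit(5)
    unfolding q_eq by (simp add: Diff_eq)
  show "card W = card (W - set us) + length us"
    using card_Diff_subset[OF finite_subset[OF orbit(3) assms(1)] orbit(3)]
      card_mono[OF assms(1) orbit(3)] distinct_card[OF orbit(1)] by simp
  have p_eq: "p = cycle_of_list us \<circ> q"
    using perm_restrict_compose_compl[OF orbit(5)] orbit(6) unfolding q_eq by simp
  have "permutation q"
    using q assms(1) permutation_permutes unfolding edge_perms_def by blast
  then show "sign p = (-1) ^ (length us - 1) * sign q"
    by (subst p_eq) (simp add: sign_compose permutation_of_cycle sign_cycle_of_list[OF orbit(1) ne])
  have "traversed_4k_cycles E (cycle_of_list us)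
      = (if 4 dvd length us then {cycle_edges us} else {})"
    using traversed_4k_cycles_cycle_of_list[OF orbit(1) len]
      is_4k_cycle_cycle_edges_iff[where E = E, OF orbit(1) len orbit(4)] by simp
  moreover have "finite (traversed_4k_cycles E q)"
    using finite_traversed_4k_cycles q assms(1) unfolding edge_perms_def by blast
  moreover have "traversed_4k_cycles E p
      = traversed_4k_cycles E (cycle_of_list us) \<union> traversed_4k_cycles E q"
    "traversed_4k_cycles E (cycle_of_list us) \<inter> traversed_4k_cycles E q = {}"
    using traversed_4k_cycles_perm_restrict[OF orbit(5)] orbit(6) unfolding q_eq by simp_all
  ultimately show "card (traversed_4k_cycles E p)
      = (if 4 dvd length us then 1 else 0) + card (traversed_4k_cycles E q)"
    by (cases "4 dvd length us") (auto simp: card_insert_if)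
qed

text \<open>A cycle of even length l contributes (-1)^(l - 1) to the sign and l/2 to card W div 2;
  these two signs differ exactly when 4 divides l.\<close>
lemma sign_edge_perm_bipartite:
  assumes "finite W" "p \<in> edge_perms E W" "\<forall>x. \<not> E x x" "\<forall>x y. E x y \<longrightarrow> (x \<in> X \<longleftrightarrow> y \<notin> X)"
  shows "even (card W)
    \<and> (-1::int) ^ (card W div 2) * sign p = (-1) ^ card (traversed_4k_cycles E p)"
  using assms(1,2)
proof (induction W arbitrary: p rule: finite_psubset_induct)
  case (psubset W)
  show ?case
  proof (cases "W = {}")
    case True
    then have "p = id" using psubset.prems by (simp add: edge_perms_def permutes_empty)
    then have "traversed_4k_cycles E p = {}" by (simp only: traversed_4k_cycles_id)
    moreover have "sign p = 1" using \<open>p = id\<close> by simp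
    ultimately show ?thesis using True by simp
  next
    case False
    then obtain s where s: "s \<in> W" by blast
    define us where "us = support p s"
    define q where "q = perm_restrict p (- set us)"
    note remove = edge_perm_remove_support[OF psubset.hyps(1) psubset.prems s assms(3,4),
        folded us_def q_def]
    have IH: "even (card (W - set us))
        \<and> (-1::int) ^ (card (W - set us) div 2) * sign q = (-1) ^ card (traversed_4k_cycles E q)"
      using psubset.IH remove(1,2) s by blast
    then have "card W div 2 = card (W - set us) div 2 + length us div 2"
      using remove(3,5) by presburger
    then show ?thesis
      using IH remove(3-7) minus_one_power_half_times_pred[OF remove(3,4)]
      by (auto simp: power_add algebra_simps)
  qed
qed

lemma edge_perms_bipartite_odd:
  assumes "finite W" "\<forall>x. \<not> E x x" "\<forall>x y. E x y \<longrightarrow> (x \<in> X \<longleftrightarrow> y \<notin> X)" "odd (card W)"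
  shows "edge_perms E W = {}"
  using sign_edge_perm_bipartite[OF assms(1) _ assms(2,3)] assms(4) by blast

lemma det_on_bipartite:
  assumes "finite W" "\<forall>x. \<not> E x x" "\<forall>x y. E x y \<longrightarrow> (x \<in> X \<longleftrightarrow> y \<notin> X)"
  shows "(-1) ^ (card W div 2) * det_on E W
    = (\<Sum>\<sigma>\<in>edge_perms E W. (-1) ^ card (traversed_4k_cycles E \<sigma>))"
  unfolding det_on_eq_sum_edge_perms[OF assms(1)] sum_distrib_left
  using sign_edge_perm_bipartite[OF assms(1) _ assms(2,3)] by (intro sum.cong) auto

lemma disjoint_4k_tuples_iff:
  "T \<in> disjoint_4k_tuples E z \<longleftrightarrow> length T = z \<and> distinct T \<and> (\<forall>R\<in>set T. is_4k_cycle E R)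
     \<and> pairwise (\<lambda>R Q. cycle_verts R \<inter> cycle_verts Q = {}) (set T)"
proof -
  have "(\<forall>i<length T. \<forall>j<length T. i \<noteq> j \<longrightarrow> cycle_verts (T ! i) \<inter> cycle_verts (T ! j) = {})
      \<longleftrightarrow> distinct T \<and> pairwise (\<lambda>R Q. cycle_verts R \<inter> cycle_verts Q = {}) (set T)"
    if "\<forall>R\<in>set T. is_4k_cycle E R"
  proof
    have nonempty: "cycle_verts (T ! i) \<noteq> {}" if "i < length T" for i
      using that \<open>\<forall>R\<in>set T. is_4k_cycle E R\<close> is_cycle_cycle_verts(2) nth_mem
      unfolding is_4k_cycle_def by blast
    assume disj: "\<forall>i<length T. \<forall>j<length T. i \<noteq> j \<longrightarrow> cycle_verts (T ! i) \<inter> cycle_verts (T ! j) = {}"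
    have "distinct T"
      unfolding distinct_conv_nth using disj nonempty by (metis Int_absorb)
    moreover have "pairwise (\<lambda>R Q. cycle_verts R \<inter> cycle_verts Q = {}) (set T)"
    proof (unfold pairwise_def, intro ballI impI)
      fix R Q assume "R \<in> set T" "Q \<in> set T" "R \<noteq> Q"
      then obtain i j where "i < length T" "j < length T" "R = T ! i" "Q = T ! j"
        by (auto simp: in_set_conv_nth)
      then show "cycle_verts R \<inter> cycle_verts Q = {}" using disj \<open>R \<noteq> Q\<close> by blast
    qed
    ultimately show "distinct T \<and> pairwise (\<lambda>R Q. cycle_verts R \<inter> cycle_verts Q = {}) (set T)" ..
  next
    assume "distinct T \<and> pairwise (\<lambda>R Q. cycle_verts R \<inter> cycle_verts Q = {}) (set T)"
    then show "\<forall>i<length T. \<forall>j<length T. i \<noteq> j \<longrightarrow> cycle_verts (T ! i) \<inter> cycle_verts (T ! j) = {}"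
      unfolding distinct_conv_nth pairwise_def by (metis nth_mem)
  qed
  then show ?thesis unfolding disjoint_4k_tuples_def by auto
qed

lemma tuple_verts_Nil [simp]: "tuple_verts [] = {}"
  by (simp add: tuple_verts_def)

lemma tuple_verts_Cons [simp]: "tuple_verts (R # T) = cycle_verts R \<union> tuple_verts T"
  by (simp add: tuple_verts_def)

lemma Cons_in_disjoint_4k_tuples_iff:
  "R # T \<in> disjoint_4k_tuples E (Suc z) \<longleftrightarrow>
    is_4k_cycle E R \<and> T \<in> disjoint_4k_tuples E z \<and> cycle_verts R \<inter> tuple_verts T = {}"
proof -
  have "R \<notin> set T" if "is_4k_cycle E R" "cycle_verts R \<inter> tuple_verts T = {}"
    using that is_cycle_cycle_verts(2) unfolding is_4k_cycle_def tuple_verts_def by blast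
  then show ?thesis
    unfolding disjoint_4k_tuples_iff by (auto simp: pairwise_insert tuple_verts_def)
qed

lemma finite_disjoint_4k_tuples:
  assumes "simple_graph V E"
  shows "finite (disjoint_4k_tuples E z)"
proof (rule finite_subset)
  show "disjoint_4k_tuples E z \<subseteq> {T. set T \<subseteq> Pow (Pow V) \<and> length T = z}"
    using simple_graph_cycle_verts_subset[OF assms]
    unfolding disjoint_4k_tuples_def is_4k_cycle_def cycle_verts_def by blast
  show "finite {T. set T \<subseteq> Pow (Pow V) \<and> length T = z}"
    using assms unfolding simple_graph_def by (simp add: finite_lists_length_eq)
qed

lemma tuple_verts_subset:
  assumes "simple_graph V E" "T \<in> disjoint_4k_tuples E z"
  shows "tuple_verts T \<subseteq> V"
proof
  fix x assume "x \<in> tuple_verts T"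
  then obtain R where R: "R \<in> set T" "x \<in> cycle_verts R" unfolding tuple_verts_def by blast
  then have "is_cycle E R" using assms(2) unfolding disjoint_4k_tuples_def is_4k_cycle_def by blast
  then show "x \<in> V" using simple_graph_cycle_verts_subset[OF assms(1)] R(2) by blast
qed

lemma four_dvd_card_tuple_verts:
  "T \<in> disjoint_4k_tuples E z \<Longrightarrow> finite (tuple_verts T) \<and> 4 dvd card (tuple_verts T)"
proof (induction T arbitrary: z)
  case (Cons R T)
  then obtain z' where "z = Suc z'" unfolding disjoint_4k_tuples_def by auto
  then have "R # T \<in> disjoint_4k_tuples E (Suc z')" using Cons.prems by simp
  then have R: "is_4k_cycle E R" and "T \<in> disjoint_4k_tuples E z'"
    and disj: "cycle_verts R \<inter> tuple_verts T = {}"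
    unfolding Cons_in_disjoint_4k_tuples_iff by auto
  then have T: "finite (tuple_verts T)" "4 dvd card (tuple_verts T)" using Cons.IH by blast+
  have cycle: "is_cycle E R" "4 dvd card R" using R unfolding is_4k_cycle_def by auto
  then have "finite (cycle_verts R)" "4 dvd card (cycle_verts R)"
    using is_cycle_cycle_verts(1,3)[OF cycle(1)] by auto
  then show ?case using T disj by (simp add: card_Un_disjoint)
qed simp

section \<open>Gluing orientations to edge permutations\<close>

lemma compose_orientation_edge_perm:
  assumes sym: "symp E" and R: "is_4k_cycle E R" and sub: "cycle_verts R \<subseteq> W"
    and \<rho>: "\<rho> \<in> orientations R" and \<sigma>: "\<sigma> \<in> edge_perms E (W - cycle_verts R)"
  shows "\<rho> \<circ> \<sigma> \<in> edge_perms E W"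
    and "perm_restrict (\<rho> \<circ> \<sigma>) (cycle_verts R) = \<rho>"
    and "perm_restrict (\<rho> \<circ> \<sigma>) (- cycle_verts R) = \<sigma>"
    and "traversed_4k_cycles E (\<rho> \<circ> \<sigma>) = insert R (traversed_4k_cycles E \<sigma>)"
    and "R \<notin> traversed_4k_cycles E \<sigma>"
proof -
  let ?U = "cycle_verts R"
  have cycle: "is_cycle E R" using R unfolding is_4k_cycle_def by simp
  have \<rho>_perm: "\<rho> permutes ?U" and \<rho>_trav: "traverses \<rho> R"
    using \<rho> unfolding orientations_def by auto
  have \<sigma>_perm: "\<sigma> permutes (W - ?U)" and \<sigma>_edges: "\<forall>i\<in>W - ?U. E i (\<sigma> i)"
    using \<sigma> unfolding edge_perms_def by auto
  have \<sigma>_in: "\<sigma> y = y" if "y \<in> ?U" for y using permutes_not_in[OF \<sigma>_perm] that by blast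
  have \<sigma>_out: "\<sigma> y \<notin> ?U" if "y \<notin> ?U" for y
    using permutes_in_image[OF \<sigma>_perm, of y] permutes_not_in[OF \<sigma>_perm, of y] that by auto
  have \<rho>_out: "\<rho> y = y" if "y \<notin> ?U" for y using permutes_not_in[OF \<rho>_perm] that by blast
  have \<rho>_in: "\<rho> y \<in> ?U" if "y \<in> ?U" for y using permutes_in_image[OF \<rho>_perm] that by blast
  have \<rho>\<sigma>_perm: "\<rho> \<circ> \<sigma> permutes W"
    using permutes_compose[OF permutes_subset[OF \<sigma>_perm] permutes_subset[OF \<rho>_perm sub]] by blast
  have "E i (\<rho> (\<sigma> i))" if "i \<in> W" for i
  proof (cases "i \<in> ?U")
    case True
    then show ?thesis
      using is_cycle_edge_adjacent[OF sym cycle traverses_edge[OF \<rho>_trav True]] \<sigma>_in by simp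
  next
    case False
    then show ?thesis using \<sigma>_edges that \<sigma>_out \<rho>_out by simp
  qed
  then show "\<rho> \<circ> \<sigma> \<in> edge_perms E W" using \<rho>\<sigma>_perm unfolding edge_perms_def by simp
  show restrict_U: "perm_restrict (\<rho> \<circ> \<sigma>) ?U = \<rho>"
    by (auto simp: fun_eq_iff perm_restrict_def \<sigma>_in \<rho>_out)
  show restrict_compl: "perm_restrict (\<rho> \<circ> \<sigma>) (- ?U) = \<sigma>"
    by (auto simp: fun_eq_iff perm_restrict_def \<sigma>_in \<rho>_out \<sigma>_out)
  have inv: "(\<rho> \<circ> \<sigma>) y \<in> ?U \<longleftrightarrow> y \<in> ?U" for y
    using \<sigma>_in \<sigma>_out \<rho>_in \<rho>_out by (cases "y \<in> ?U") auto
  have "traversed_4k_cycles E (\<rho> \<circ> \<sigma>) = traversed_4k_cycles E \<rho> \<union> traversed_4k_cycles E \<sigma>"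
    "traversed_4k_cycles E \<rho> \<inter> traversed_4k_cycles E \<sigma> = {}"
    using traversed_4k_cycles_perm_restrict[where E = E, OF inv] unfolding restrict_U restrict_compl
    by (simp_all add: comp_def)
  then show "traversed_4k_cycles E (\<rho> \<circ> \<sigma>) = insert R (traversed_4k_cycles E \<sigma>)"
    and "R \<notin> traversed_4k_cycles E \<sigma>"
    using traversed_4k_cycles_orientation[OF R \<rho>] by auto
qed

lemma decompose_edge_perm_traversing:
  assumes "is_4k_cycle E R" "cycle_verts R \<subseteq> W"
    and \<tau>: "\<tau> \<in> edge_perms E W" "R \<in> traversed_4k_cycles E \<tau>"
  shows "perm_restrict \<tau> (cycle_verts R) \<in> orientations R"
    and "perm_restrict \<tau> (- cycle_verts R) \<in> edge_perms E (W - cycle_verts R)"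
    and "\<tau> = perm_restrict \<tau> (cycle_verts R) \<circ> perm_restrict \<tau> (- cycle_verts R)"
proof -
  let ?U = "cycle_verts R"
  have cycle: "is_cycle E R" and trav: "traverses \<tau> R" using traversed_4k_cyclesD(2,3)[OF \<tau>(2)] .
  have "inj \<tau>" using \<tau>(1) permutes_inj unfolding edge_perms_def by blast
  then have inv: "\<tau> y \<in> ?U \<longleftrightarrow> y \<in> ?U" for y using traverses_invariant[OF cycle trav] by blast
  then have "perm_restrict \<tau> ?U \<in> edge_perms E (W \<inter> ?U)" by (rule perm_restrict_edge_perms[OF \<tau>(1)])
  moreover have "traverses (perm_restrict \<tau> ?U) R"
    using trav traverses_perm_restrict_iff[OF cycle] by blast
  ultimately show "perm_restrict \<tau> ?U \<in> orientations R"
    using assms(2) unfolding edge_perms_def orientations_def by (simp add: Int_absorb1)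
  have "\<tau> y \<in> - ?U \<longleftrightarrow> y \<in> - ?U" for y using inv by simp
  then show "perm_restrict \<tau> (- ?U) \<in> edge_perms E (W - ?U)"
    using perm_restrict_edge_perms[OF \<tau>(1)] by (simp add: Diff_eq)
  show "\<tau> = perm_restrict \<tau> ?U \<circ> perm_restrict \<tau> (- ?U)"
    using perm_restrict_compose_compl[OF inv] .
qed

lemma bij_betw_compose_orientation:
  assumes "symp E" "is_4k_cycle E R" "cycle_verts R \<subseteq> W" "R \<notin> S"
  shows "bij_betw (\<lambda>(\<rho>, \<sigma>). \<rho> \<circ> \<sigma>)
    (orientations R \<times> {\<sigma> \<in> edge_perms E (W - cycle_verts R). S \<subseteq> traversed_4k_cycles E \<sigma>})
    {\<tau> \<in> edge_perms E W. insert R S \<subseteq> traversed_4k_cycles E \<tau>}"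
proof (rule bij_betwI')
  let ?U = "cycle_verts R"
  note compose = compose_orientation_edge_perm[OF assms(1-3)]
  show "((\<lambda>(\<rho>, \<sigma>). \<rho> \<circ> \<sigma>) x = (\<lambda>(\<rho>, \<sigma>). \<rho> \<circ> \<sigma>) y) = (x = y)"
    if "x \<in> orientations R \<times> {\<sigma> \<in> edge_perms E (W - ?U). S \<subseteq> traversed_4k_cycles E \<sigma>}"
      "y \<in> orientations R \<times> {\<sigma> \<in> edge_perms E (W - ?U). S \<subseteq> traversed_4k_cycles E \<sigma>}" for x y
    using that compose(2,3)
      by (cases x; cases y) (metis (no_types, lifting) mem_Collect_eq mem_Sigma_iff case_prod_conv)
  show "(\<lambda>(\<rho>, \<sigma>). \<rho> \<circ> \<sigma>) x \<in> {\<tau> \<in> edge_perms E W. insert R S \<subseteq> traversed_4k_cycles E \<tau>}"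
    if "x \<in> orientations R \<times> {\<sigma> \<in> edge_perms E (W - ?U). S \<subseteq> traversed_4k_cycles E \<sigma>}" for x
    using that compose(1,4) by auto
  show "\<exists>x\<in>orientations R \<times> {\<sigma> \<in> edge_perms E (W - ?U). S \<subseteq> traversed_4k_cycles E \<sigma>}.
      \<tau> = (\<lambda>(\<rho>, \<sigma>). \<rho> \<circ> \<sigma>) x"
    if \<tau>: "\<tau> \<in> {\<tau> \<in> edge_perms E W. insert R S \<subseteq> traversed_4k_cycles E \<tau>}" for \<tau>
  proof -
    let ?\<rho> = "perm_restrict \<tau> ?U" and ?\<sigma> = "perm_restrict \<tau> (- ?U)"
    have "\<tau> \<in> edge_perms E W" "R \<in> traversed_4k_cycles E \<tau>" using \<tau> by auto
    note decompose = decompose_edge_perm_traversing[OF assms(2,3) this]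
    have "traversed_4k_cycles E \<tau> = insert R (traversed_4k_cycles E ?\<sigma>)"
      using compose(4)[OF decompose(1,2)] decompose(3) by simp
    then have "S \<subseteq> traversed_4k_cycles E ?\<sigma>" using \<tau> assms(4) by auto
    then have "(?\<rho>, ?\<sigma>) \<in> orientations R \<times> {\<sigma> \<in> edge_perms E (W - ?U). S \<subseteq> traversed_4k_cycles E \<sigma>}"
      using decompose(1,2) by simp
    moreover have "\<tau> = (\<lambda>(\<rho>, \<sigma>). \<rho> \<circ> \<sigma>) (?\<rho>, ?\<sigma>)"
      unfolding prod.case by (rule decompose(3))
    ultimately show ?thesis by blast
  qed
qed

lemma sum_edge_perms_traversing_tuple:
  fixes f :: "nat \<Rightarrow> 'b::comm_semiring_1"
  assumes "finite W" "symp E"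
    and "T \<in> disjoint_4k_tuples E (length T)" "tuple_verts T \<subseteq> W"
  shows "(\<Sum>\<tau>\<in>{\<tau> \<in> edge_perms E W. set T \<subseteq> traversed_4k_cycles E \<tau>}.
        f (card (traversed_4k_cycles E \<tau>)))
    = 2 ^ length T * (\<Sum>\<sigma>\<in>edge_perms E (W - tuple_verts T).
        f (card (traversed_4k_cycles E \<sigma>) + length T))"
  using assms(1,3,4)
proof (induction T arbitrary: W f)
  case (Cons R T)
  let ?U = "cycle_verts R" and ?C4 = "traversed_4k_cycles E"
  have R: "is_4k_cycle E R" and T: "T \<in> disjoint_4k_tuples E (length T)"
    and disj: "?U \<inter> tuple_verts T = {}"
    using Cons.prems(2) Cons_in_disjoint_4k_tuples_iff[of R T E "length T"] by auto
  have sub: "?U \<subseteq> W" "tuple_verts T \<subseteq> W - ?U" using Cons.prems(3) disj by auto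
  have "R \<notin> set T" using T Cons.prems(2) unfolding disjoint_4k_tuples_iff by simp
  define S where "S = {\<sigma> \<in> edge_perms E (W - ?U). set T \<subseteq> ?C4 \<sigma>}"
  note compose = compose_orientation_edge_perm[OF assms(2) R sub(1)]
  have "bij_betw (\<lambda>(\<rho>, \<sigma>). \<rho> \<circ> \<sigma>) (orientations R \<times> S)
      {\<tau> \<in> edge_perms E W. set (R # T) \<subseteq> ?C4 \<tau>}"
    using bij_betw_compose_orientation[OF assms(2) R sub(1) \<open>R \<notin> set T\<close>] unfolding S_def by simp
  then have "(\<Sum>\<tau>\<in>{\<tau> \<in> edge_perms E W. set (R # T) \<subseteq> ?C4 \<tau>}. f (card (?C4 \<tau>)))
      = (\<Sum>(\<rho>, \<sigma>)\<in>orientations R \<times> S. f (card (?C4 (\<rho> \<circ> \<sigma>))))"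
    by (simp add: sum.reindex_bij_betw[symmetric] case_prod_unfold)
  also have "\<dots> = (\<Sum>\<rho>\<in>orientations R. \<Sum>\<sigma>\<in>S. f (card (?C4 \<sigma>) + 1))"
    unfolding sum.cartesian_product[symmetric]
  proof (intro sum.cong refl)
    fix \<rho> \<sigma> assume "\<rho> \<in> orientations R" "\<sigma> \<in> S"
    moreover have "finite (?C4 \<sigma>)" if "\<sigma> \<in> S"
      using that finite_traversed_4k_cycles Cons.prems(1) unfolding S_def edge_perms_def by blast
    ultimately show "f (card (?C4 (\<rho> \<circ> \<sigma>))) = f (card (?C4 \<sigma>) + 1)"
      using compose(4,5) unfolding S_def by simp
  qed
  also have "\<dots> = 2 * (\<Sum>\<sigma>\<in>S. f (card (?C4 \<sigma>) + 1))"
    using card_orientations[of E R] R unfolding is_4k_cycle_def by simp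
  also have "(\<Sum>\<sigma>\<in>S. f (card (?C4 \<sigma>) + 1))
      = 2 ^ length T * (\<Sum>\<sigma>\<in>edge_perms E (W - ?U - tuple_verts T). f (card (?C4 \<sigma>) + length T + 1))"
    unfolding S_def using Cons.IH[OF _ T sub(2), of "\<lambda>k. f (k + 1)"] Cons.prems(1) by simp
  also have "W - ?U - tuple_verts T = W - tuple_verts (R # T)" by auto
  finally show ?case by (simp add: algebra_simps)
qed simp

lemma card_distinct_lists_subset:
  assumes "finite C"
  shows "card {xs. length xs = k \<and> distinct xs \<and> set xs \<subseteq> C} = fact k * (card C choose k)"
proof (cases "k \<le> card C")
  case True
  have "fact (card C - k) * \<Prod>{card C - k + 1..card C}
      = fact (card C - k) * (fact k * (card C choose k))"
    using fact_eq_fact_times[of "card C - k" "card C"] binomial_fact_lemma[OF True]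
    by (simp add: algebra_simps)
  then show ?thesis using card_lists_distinct_length_eq[OF assms True] by simp
next
  case False
  have "k \<le> card C" if "length xs = k" "distinct xs" "set xs \<subseteq> C" for xs
    using card_mono[OF assms that(3)] distinct_card[OF that(2)] that(1) by simp
  then have "{xs. length xs = k \<and> distinct xs \<and> set xs \<subseteq> C} = {}" using False by blast
  then have "card {xs. length xs = k \<and> distinct xs \<and> set xs \<subseteq> C} = 0" by (simp only: card.empty)
  moreover have "card C choose k = 0" using False by simp
  ultimately show ?thesis by (simp only: mult_0_right)
qed

lemma sum_choose_minus_two:
  assumes "c \<le> m"
  shows "(\<Sum>z = 0..m. of_nat (c choose z) * (-2::'a::comm_ring_1) ^ z) = (-1) ^ c"
proof -
  have "(\<Sum>z = 0..m. of_nat (c choose z) * (-2::'a) ^ z)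
      = (\<Sum>z = 0..c. of_nat (c choose z) * (-2) ^ z)"
    using assms by (intro sum.mono_neutral_right) (auto simp: binomial_eq_0)
  also have "\<dots> = (\<Sum>z\<le>c. of_nat (c choose z) * (-2) ^ z * 1 ^ (c - z))"
    by (simp add: atLeast0AtMost)
  also have "\<dots> = (-2 + 1) ^ c" by (rule binomial_ring[symmetric])
  finally show ?thesis by simp
qed

lemma sum_card_filter_swap:
  assumes "finite A" "finite B"
  shows "(\<Sum>b\<in>B. of_nat (card {a \<in> A. P a b}) * f b) = (\<Sum>a\<in>A. \<Sum>b\<in>{b \<in> B. P a b}. f b)"
  using sum.swap_restrict[OF assms, of "\<lambda>_ b. f b" P] by simp

lemma sum_tuples_traversed:
  assumes "bij \<tau>" "finite (traversed_4k_cycles E \<tau>)" "\<forall>z. disjoint_4k_tuples E z \<noteq> {} \<longrightarrow> z \<le> m"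
  shows "(\<Sum>z = 0..m. (-2) ^ z / fact z
      * real (card {T \<in> disjoint_4k_tuples E z. set T \<subseteq> traversed_4k_cycles E \<tau>}))
    = (-1) ^ card (traversed_4k_cycles E \<tau>)"
proof -
  let ?C = "traversed_4k_cycles E \<tau>"
  have "pairwise (\<lambda>R Q. cycle_verts R \<inter> cycle_verts Q = {}) ?C"
    unfolding pairwise_def by (intro ballI impI traversed_4k_cycles_disjoint[OF assms(1)])
  then have tuples:
    "{T \<in> disjoint_4k_tuples E z. set T \<subseteq> ?C} = {T. length T = z \<and> distinct T \<and> set T \<subseteq> ?C}" for z
    unfolding disjoint_4k_tuples_iff by (auto intro: pairwise_subset traversed_4k_cyclesD(1))
  obtain L where L: "set L = ?C" "distinct L" using finite_distinct_list[OF assms(2)] by blast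
  have "L \<in> {T \<in> disjoint_4k_tuples E (card ?C). set T \<subseteq> ?C}"
    unfolding tuples using L distinct_card[OF L(2)] by simp
  then have "L \<in> disjoint_4k_tuples E (card ?C)" by simp
  then have "card ?C \<le> m" using assms(3) by blast
  then have "(\<Sum>z = 0..m. of_nat (card ?C choose z) * (-2::real) ^ z) = (-1) ^ card ?C"
    by (rule sum_choose_minus_two)
  then show ?thesis
    unfolding tuples card_distinct_lists_subset[OF assms(2)] by (simp add: mult.commute)
qed

lemma sum_edge_perms_traversing_disjoint_tuple:
  assumes "simple_graph V E" "\<forall>x y. E x y \<longrightarrow> (x \<in> X \<longleftrightarrow> y \<notin> X)" "T \<in> disjoint_4k_tuples E z"
  shows "(\<Sum>\<tau>\<in>{\<tau> \<in> edge_perms E V. set T \<subseteq> traversed_4k_cycles E \<tau>}.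
        (-1::real) ^ card (traversed_4k_cycles E \<tau>))
    = (-2) ^ z * ((-1) ^ (card V div 2) * real_of_int (det_on E (V - tuple_verts T)))"
proof -
  let ?W = "V - tuple_verts T" and ?C4 = "traversed_4k_cycles E"
  have fin: "finite V" and sym: "symp E" and irrefl: "\<forall>x. \<not> E x x"
    using assms(1) unfolding simple_graph_def symp_def by auto
  have len: "length T = z" using assms(3) unfolding disjoint_4k_tuples_def by simp
  have sub: "tuple_verts T \<subseteq> V" by (rule tuple_verts_subset[OF assms(1,3)])
  have "card V = card ?W + card (tuple_verts T)"
    using card_Diff_subset[OF finite_subset[OF sub fin] sub] card_mono[OF fin sub] by simp
  then have "card V div 2 = card ?W div 2 + 2 * (card (tuple_verts T) div 4)"
    using conjunct2[OF four_dvd_card_tuple_verts[OF assms(3)]] by presburger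
  then have sign: "(-1::real) ^ (card V div 2) = (-1) ^ (card ?W div 2)"
    by (simp add: power_add power_mult)
  have "(\<Sum>\<tau>\<in>{\<tau> \<in> edge_perms E V. set T \<subseteq> ?C4 \<tau>}. (-1::real) ^ card (?C4 \<tau>))
      = 2 ^ z * (\<Sum>\<sigma>\<in>edge_perms E ?W. (-1) ^ (card (?C4 \<sigma>) + z))"
    using sum_edge_perms_traversing_tuple[OF fin sym _ sub] assms(3) len by simp
  also have "\<dots> = (-2) ^ z * (\<Sum>\<sigma>\<in>edge_perms E ?W. (-1) ^ card (?C4 \<sigma>))"
  proof -
    have "(-2::real) ^ z = 2 ^ z * (-1) ^ z" by (simp add: power_mult_distrib[symmetric])
    then show ?thesis by (simp add: power_add sum_distrib_left mult_ac)
  qed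
  also have "(\<Sum>\<sigma>\<in>edge_perms E ?W. (-1::real) ^ card (?C4 \<sigma>))
      = (-1) ^ (card ?W div 2) * real_of_int (det_on E ?W)"
  proof -
    have "(-1) ^ (card ?W div 2) * det_on E ?W = (\<Sum>\<sigma>\<in>edge_perms E ?W. (-1) ^ card (?C4 \<sigma>))"
      using det_on_bipartite[OF _ irrefl assms(2)] fin by simp
    from arg_cong[where f = real_of_int, OF this] show ?thesis by simp
  qed
  finally show ?thesis using sign by simp
qed

lemma card_edge_perms_eq_sum_tuples:
  assumes "simple_graph V E" "\<forall>z. disjoint_4k_tuples E z \<noteq> {} \<longrightarrow> z \<le> m"
  shows "real (card (edge_perms E V)) = (\<Sum>z = 0..m. (-2) ^ z / fact z * (\<Sum>T\<in>disjoint_4k_tuples E z.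
      \<Sum>\<tau>\<in>{\<tau> \<in> edge_perms E V. set T \<subseteq> traversed_4k_cycles E \<tau>}.
        (-1) ^ card (traversed_4k_cycles E \<tau>)))"
proof -
  let ?C4 = "traversed_4k_cycles E"
  let ?N = "\<lambda>z \<tau>. real (card {T \<in> disjoint_4k_tuples E z. set T \<subseteq> ?C4 \<tau>})"
  have fin: "finite V" using assms(1) unfolding simple_graph_def by simp
  have "real (card (edge_perms E V))
      = (\<Sum>\<tau>\<in>edge_perms E V. (-1) ^ card (?C4 \<tau>) * (-1) ^ card (?C4 \<tau>))"
    by (simp add: power_add[symmetric])
  also have "\<dots> = (\<Sum>\<tau>\<in>edge_perms E V. (\<Sum>z = 0..m. (-2) ^ z / fact z * ?N z \<tau>) * (-1) ^ card (?C4 \<tau>))"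
  proof (intro sum.cong refl)
    fix \<tau> assume "\<tau> \<in> edge_perms E V"
    then have "\<tau> permutes V" by (simp add: edge_perms_def)
    then show "(-1) ^ card (?C4 \<tau>) * (-1) ^ card (?C4 \<tau>)
        = (\<Sum>z = 0..m. (-2) ^ z / fact z * ?N z \<tau>) * (-1) ^ card (?C4 \<tau>)"
      using sum_tuples_traversed[OF permutes_bij finite_traversed_4k_cycles[OF _ fin] assms(2)]
        by simp
  qed
  also have "\<dots> = (\<Sum>z = 0..m. (-2) ^ z / fact z * (\<Sum>\<tau>\<in>edge_perms E V. ?N z \<tau> * (-1) ^ card (?C4 \<tau>)))"
    by (simp add: sum_distrib_left sum_distrib_right sum.swap[of _ "edge_perms E V"] mult_ac)
  also have "\<dots> = (\<Sum>z = 0..m. (-2) ^ z / fact z * (\<Sum>T\<in>disjoint_4k_tuples E z.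
      \<Sum>\<tau>\<in>{\<tau> \<in> edge_perms E V. set T \<subseteq> ?C4 \<tau>}. (-1) ^ card (?C4 \<tau>)))"
    by (simp only:
        sum_card_filter_swap[OF finite_disjoint_4k_tuples[OF assms(1)] finite_edge_perms[OF fin]])
  finally show ?thesis .
qed

theorem theorem1:
  fixes V :: "'a set" and E :: "'a \<Rightarrow> 'a \<Rightarrow> bool" and m :: nat
  assumes "simple_graph V E"
    and "bipartite V E"
    and "\<forall>z. disjoint_4k_tuples E z \<noteq> {} \<longrightarrow> z \<le> m"
  shows "real_of_int (per_on E V) =
    (if even (card V)
     then (-1) ^ (card V div 2) *
          (\<Sum>z = 0..m. 4 ^ z / fact z *
             (\<Sum>T \<in> disjoint_4k_tuples E z. real_of_int (det_on E (V - tuple_verts T))))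
     else 0)"
proof -
  have fin: "finite V" and irrefl: "\<forall>x. \<not> E x x" using assms(1) unfolding simple_graph_def by auto
  obtain X where X: "\<forall>x y. E x y \<longrightarrow> (x \<in> X \<longleftrightarrow> y \<notin> X)" using assms(2) unfolding bipartite_def by blast
  have per: "per_on E V = int (card (edge_perms E V))" by (rule per_on_eq_card_edge_perms[OF fin])
  show ?thesis
  proof (cases "even (card V)")
    case True
    have four: "(-2::real) ^ z * ((-2) ^ z * x) = 4 ^ z * x" for z x
      by (simp add: power_mult_distrib[symmetric])
    have "real (card (edge_perms E V)) = (-1) ^ (card V div 2) * (\<Sum>z = 0..m. 4 ^ z / fact z
        * (\<Sum>T\<in>disjoint_4k_tuples E z. real_of_int (det_on E (V - tuple_verts T))))"
      unfolding card_edge_perms_eq_sum_tuples[OF assms(1,3)]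
      using sum_edge_perms_traversing_disjoint_tuple[OF assms(1) X]
      by (simp add: sum_distrib_left four algebra_simps)
    then show ?thesis using True per by simp
  next
    case False
    then show ?thesis using per edge_perms_bipartite_odd[OF fin irrefl X] by simp
  qed
qed

end
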